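(* Let $G$ be a connected graph and let $(T,\mathcal X)$, $\mathcal X=\{X_t:t\in V(T)\}$, be a tree-cut decomposition of $G$ of finite adhesion whose parts are exactly the $\omega$-edge blocks of $G$ and such that for every edge $t_1t_2\in E(T)$ there is an edge of $G$ between $X_{t_1}$ and $X_{t_2}$. For a subgraph $C'$ of $T$ write $\bigcup C'=\bigcup_{t\in V(C')}X_t$. Then: (1) for every region $C'$ of $T$, the induced subgraph $G[\bigcup C']$ is a region of $G$; (2) for every region $C$ of $G$ there exist finitely many pairwise disjoint regions $C'_1,\dots,C'_n$ of $T$ such that $C=G[\bigcup C'_1\cup\dots\cup\bigcup C'_n]$.
   Context: Two vertices $x,y$ of $G$ are finitely separable if some finite set of edges separates them in $G$; the equivalence classes of the relation "not finitely separable" are the $\omega$-edge blocks of $G$. A tree-cut decomposition of $G$ is a pair $(T,\mathcal X)$ with $T$ a tree and $\mathcal X=\{X_t:t\in V(T)\}$ a partition of $V(G)$ into nonempty parts indexed by $V(T)$. For an edge $e=t_1t_2$ of $T$ with $T_1\ni t_1$, $T_2\ni t_2$ the components of $T-e$, its adhesion set is $X_e=E_G(\bigcup_{t\in T_1}X_t,\bigcup_{t\in T_2}X_t)$; finite adhesion means all $X_e$ are finite. A region of a graph $H$ is a connected induced subgraph $C$ with finite boundary $\partial C=\{xy\in E(H):x\in C,y\notin C\}$. *)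

theory Defs
  imports Main
begin

definition graph :: "'a set \<Rightarrow> 'a set set \<Rightarrow> bool" where
  "graph V E \<longleftrightarrow> (\<forall>e\<in>E. \<exists>x y. x \<in> V \<and> y \<in> V \<and> x \<noteq> y \<and> e = {x, y})"

definition adj_in :: "'a set \<Rightarrow> 'a set set \<Rightarrow> 'a \<Rightarrow> 'a \<Rightarrow> bool" where
  "adj_in S E x y \<longleftrightarrow> x \<in> S \<and> y \<in> S \<and> {x, y} \<in> E"

definition comp_of :: "'a set \<Rightarrow> 'a set set \<Rightarrow> 'a \<Rightarrow> 'a set" where
  "comp_of S E x = {y \<in> S. (adj_in S E)\<^sup>*\<^sup>* x y}"

definition connected_in :: "'a set set \<Rightarrow> 'a set \<Rightarrow> bool" where
  "connected_in E S \<longleftrightarrow> S \<noteq> {} \<and> (\<forall>x\<in>S. \<forall>y\<in>S. (adj_in S E)\<^sup>*\<^sup>* x y)"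

definition edges_between :: "'a set set \<Rightarrow> 'a set \<Rightarrow> 'a set \<Rightarrow> 'a set set" where
  "edges_between E A B = {e \<in> E. \<exists>x\<in>A. \<exists>y\<in>B. e = {x, y}}"

definition region :: "'a set \<Rightarrow> 'a set set \<Rightarrow> 'a set \<Rightarrow> bool" where
  "region V E C \<longleftrightarrow> C \<subseteq> V \<and> connected_in E C \<and> finite (edges_between E C (V - C))"

definition tree :: "'b set \<Rightarrow> 'b set set \<Rightarrow> bool" where
  "tree VT ET \<longleftrightarrow> graph VT ET \<and> connected_in ET VT \<and>
     (\<forall>t1 t2. {t1, t2} \<in> ET \<longrightarrow> t2 \<notin> comp_of VT (ET - {{t1, t2}}) t1)"

definition fin_separable :: "'a set \<Rightarrow> 'a set set \<Rightarrow> 'a \<Rightarrow> 'a \<Rightarrow> bool" where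
  "fin_separable V E x y \<longleftrightarrow> (\<exists>F. F \<subseteq> E \<and> finite F \<and> y \<notin> comp_of V (E - F) x)"

definition omega_edge_blocks :: "'a set \<Rightarrow> 'a set set \<Rightarrow> 'a set set" where
  "omega_edge_blocks V E = {{y \<in> V. \<not> fin_separable V E x y} | x. x \<in> V}"

definition tree_cut_decomposition ::
  "'a set \<Rightarrow> 'b set \<Rightarrow> 'b set set \<Rightarrow> ('b \<Rightarrow> 'a set) \<Rightarrow> bool" where
  "tree_cut_decomposition V VT ET X \<longleftrightarrow> tree VT ET \<and>
     (\<forall>t\<in>VT. X t \<noteq> {}) \<and>
     (\<forall>s\<in>VT. \<forall>t\<in>VT. s \<noteq> t \<longrightarrow> X s \<inter> X t = {}) \<and>
     (\<Union>t\<in>VT. X t) = V"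

definition adhesion ::
  "'a set set \<Rightarrow> 'b set \<Rightarrow> 'b set set \<Rightarrow> ('b \<Rightarrow> 'a set) \<Rightarrow> 'b \<Rightarrow> 'b \<Rightarrow> 'a set set" where
  "adhesion E VT ET X t1 t2 =
     edges_between E (\<Union>t\<in>comp_of VT (ET - {{t1, t2}}) t1. X t)
                     (\<Union>t\<in>comp_of VT (ET - {{t1, t2}}) t2. X t)"

definition finite_adhesion ::
  "'a set set \<Rightarrow> 'b set \<Rightarrow> 'b set set \<Rightarrow> ('b \<Rightarrow> 'a set) \<Rightarrow> bool" where
  "finite_adhesion E VT ET X \<longleftrightarrow>
     (\<forall>t1 t2. {t1, t2} \<in> ET \<longrightarrow> finite (adhesion E VT ET X t1 t2))"

end

(* Since the parts X t are the omega-edge blocks, a vertex set C with finite boundary contains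
   every part it meets, and any two vertices of such a part are joined by a path of G avoiding
   the boundary of C, hence running inside C.

   (1) Let U be the union of the parts of a region C' of T. Following a path of T from a node
   of C' to a node outside C' up to its last exit from C' shows that every boundary edge of U
   lies in the adhesion set of one of the finitely many edges of T leaving C', so U has finite
   boundary. Then U is connected: inside each part by the remark above, and across each edge of
   T[C'] by the assumed edge of G between the two parts.

   (2) A region C of G is the union of the parts meeting it, indexed by a set S of nodes of T.
   Every edge of T leaving S comes from an edge of G leaving C, so S has finite boundary. The
   components of T[S] are the required regions: the boundary of each lies in that of S, and
   each component other than T itself contains an end of a boundary edge of S, so there are
   only finitely many. *)
theory Submission
  imports Defs
begin

abbreviation boundary :: "'a set \<Rightarrow> 'a set set \<Rightarrow> 'a set \<Rightarrow> 'a set set" where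
  "boundary V E C \<equiv> edges_between E C (V - C)"

lemma symp_adj_in: "symp (adj_in S E)"
  by (auto intro: sympI simp: adj_in_def insert_commute)

lemma reachable_sym: "(adj_in S E)\<^sup>*\<^sup>* x y \<Longrightarrow> (adj_in S E)\<^sup>*\<^sup>* y x"
  using symp_rtranclp[OF symp_adj_in] by (rule sympD)

lemma rtranclp_exit:
  assumes "R\<^sup>*\<^sup>* a b" "P a" "\<not> P b"
  obtains x y where "R x y" "P x" "\<not> P y"
  using assms by induction blast+

lemma reachable_mono:
  "S \<subseteq> S' \<Longrightarrow> (adj_in S E)\<^sup>*\<^sup>* x y \<Longrightarrow> (adj_in S' E)\<^sup>*\<^sup>* x y"
  by (erule rtranclp_mono[THEN predicate2D, rotated]) (auto simp: adj_in_def)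

lemma adj_in_Diff_edge: "t \<notin> S \<Longrightarrow> adj_in S (E - {{s, t}}) = adj_in S E"
  by (auto simp: adj_in_def doubleton_eq_iff fun_eq_iff)

lemma mem_comp_of_self: "t \<in> S \<Longrightarrow> t \<in> comp_of S E t"
  unfolding comp_of_def by simp

lemma comp_of_subset: "comp_of S E t \<subseteq> S"
  unfolding comp_of_def by blast

lemma comp_of_closed: "k \<in> comp_of S E t \<Longrightarrow> adj_in S E k u \<Longrightarrow> u \<in> comp_of S E t"
  unfolding comp_of_def by (auto simp: adj_in_def intro: rtranclp.rtrancl_into_rtrancl)

lemma comp_of_eq:
  assumes "z \<in> comp_of S E t"
  shows "comp_of S E z = comp_of S E t"
proof -
  from assms have "(adj_in S E)\<^sup>*\<^sup>* t z" by (simp add: comp_of_def)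
  then have "(adj_in S E)\<^sup>*\<^sup>* z y \<longleftrightarrow> (adj_in S E)\<^sup>*\<^sup>* t y" for y
    by (meson reachable_sym rtranclp_trans)
  then show ?thesis unfolding comp_of_def by blast
qed

lemma comp_of_disjoint:
  "comp_of S E s \<noteq> comp_of S E t \<Longrightarrow> comp_of S E s \<inter> comp_of S E t = {}"
  by (metis comp_of_eq disjoint_iff)

lemma UN_comp_of: "(\<Union>t\<in>S. comp_of S E t) = S"
  using comp_of_subset[of S E] by (auto intro: mem_comp_of_self)

lemma reachable_within_comp_of:
  "(adj_in S E)\<^sup>*\<^sup>* t k \<Longrightarrow> (adj_in (comp_of S E t) E)\<^sup>*\<^sup>* t k"
proof (induction rule: rtranclp_induct)
  case base
  then show ?case by simp
next
  case (step k w)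
  from step.hyps(2) have "k \<in> S" by (simp add: adj_in_def)
  with step.hyps(1) have k: "k \<in> comp_of S E t" unfolding comp_of_def by simp
  moreover from k step.hyps(2) have "w \<in> comp_of S E t" by (rule comp_of_closed)
  ultimately have "adj_in (comp_of S E t) E k w" using step.hyps(2) by (simp add: adj_in_def)
  with step.IH show ?case by (rule rtranclp.rtrancl_into_rtrancl)
qed

lemma connected_in_comp_of:
  assumes "t \<in> S"
  shows "connected_in E (comp_of S E t)"
proof -
  have "(adj_in (comp_of S E t) E)\<^sup>*\<^sup>* t x" if "x \<in> comp_of S E t" for x
  proof -
    from that have "(adj_in S E)\<^sup>*\<^sup>* t x" by (simp add: comp_of_def)
    then show ?thesis by (rule reachable_within_comp_of)
  qed
  then have "(adj_in (comp_of S E t) E)\<^sup>*\<^sup>* x y"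
    if "x \<in> comp_of S E t" "y \<in> comp_of S E t" for x y
    using that by (meson reachable_sym rtranclp_trans)
  with mem_comp_of_self[OF assms] show ?thesis unfolding connected_in_def by blast
qed

lemma connected_in_subset_comp_of:
  "connected_in E C \<Longrightarrow> C \<subseteq> S \<Longrightarrow> t \<in> C \<Longrightarrow> C \<subseteq> comp_of S E t"
  unfolding connected_in_def comp_of_def by (blast intro: reachable_mono)

lemma boundary_comp_of_subset: "boundary V E (comp_of S E t) \<subseteq> boundary V E S"
proof -
  have "u \<notin> S" if "k \<in> comp_of S E t" "u \<notin> comp_of S E t" "{k, u} \<in> E" for k u
  proof
    assume "u \<in> S"
    moreover have "k \<in> S" using that(1) by (simp add: comp_of_def)
    ultimately have "adj_in S E k u" using that(3) by (simp add: adj_in_def)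
    from comp_of_closed[OF that(1) this] that(2) show False by blast
  qed
  then show ?thesis using comp_of_subset[of S E t] unfolding edges_between_def by blast
qed

lemma region_comp_of:
  assumes "S \<subseteq> V" "t \<in> S" "finite (boundary V E S)"
  shows "region V E (comp_of S E t)"
  unfolding region_def
  using comp_of_subset[of S E t] assms(1) connected_in_comp_of[OF assms(2)]
    finite_subset[OF boundary_comp_of_subset assms(3)] by blast

lemma finite_comp_of_image:
  assumes "connected_in E V" "S \<subseteq> V" "finite (boundary V E S)"
  shows "finite (comp_of S E ` S)"
proof -
  have "comp_of S E ` S \<subseteq> insert V (\<Union>f\<in>boundary V E S. comp_of S E ` (f \<inter> S))"
  proof
    fix K assume "K \<in> comp_of S E ` S"
    then obtain t where t: "t \<in> S" "K = comp_of S E t" by blast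
    show "K \<in> insert V (\<Union>f\<in>boundary V E S. comp_of S E ` (f \<inter> S))"
    proof (cases "V \<subseteq> K")
      case True
      then show ?thesis using t comp_of_subset[of S E t] assms(2) by blast
    next
      case False
      then obtain u where "u \<in> V" "u \<notin> K" by blast
      moreover have "(adj_in V E)\<^sup>*\<^sup>* t u"
        using assms(1,2) t(1) \<open>u \<in> V\<close> unfolding connected_in_def by blast
      moreover have "t \<in> K" using t mem_comp_of_self by simp
      ultimately obtain k y where "adj_in V E k y" "k \<in> K" "y \<notin> K"
        using rtranclp_exit[of "adj_in V E" t u "\<lambda>x. x \<in> K"] by blast
      then have "{k, y} \<in> boundary V E K"
        unfolding adj_in_def edges_between_def by blast
      then have "{k, y} \<in> boundary V E S"
        using boundary_comp_of_subset[of E S t V] t(2) by blast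
      moreover from \<open>k \<in> K\<close> t(2) have "k \<in> S" "K = comp_of S E k"
        using comp_of_eq[of k S E t] by (simp_all add: comp_of_def)
      ultimately show ?thesis by blast
    qed
  qed
  moreover have "finite f" if "f \<in> boundary V E S" for f
    using that unfolding edges_between_def by auto
  then have "finite (insert V (\<Union>f\<in>boundary V E S. comp_of S E ` (f \<inter> S)))"
    using assms(3) by simp
  ultimately show ?thesis by (rule finite_subset)
qed

lemma reachable_avoiding_boundary:
  assumes "(adj_in V (E - F))\<^sup>*\<^sup>* a b" "a \<in> C" "boundary V E C \<subseteq> F"
  shows "b \<in> C \<and> (adj_in C E)\<^sup>*\<^sup>* a b"
  using assms(1)
proof (induction rule: rtranclp_induct)
  case base
  then show ?case using assms(2) by simp
next
  case (step b c)
  then have "c \<in> C" using assms(3) by (auto simp: adj_in_def edges_between_def)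
  with step have "adj_in C E b c" by (simp add: adj_in_def)
  with step.IH \<open>c \<in> C\<close> show ?case by (meson rtranclp.rtrancl_into_rtrancl)
qed

lemma reachable_last_exit:
  assumes "(adj_in V E)\<^sup>*\<^sup>* s u" "s \<in> C" "u \<notin> C"
  obtains t1 t2 where "t1 \<in> C" "t2 \<in> V - C" "{t1, t2} \<in> E"
    "u \<in> comp_of V (E - {{t1, t2}}) t2"
proof -
  have "u \<in> C \<or> (\<exists>t1 t2. t1 \<in> C \<and> t2 \<in> V - C \<and> {t1, t2} \<in> E \<and>
           u \<in> comp_of V (E - {{t1, t2}}) t2)"
    using assms(1)
  proof (induction rule: rtranclp_induct)
    case base
    then show ?case using assms(2) by simp
  next
    case (step u w)
    from step.hyps(2) have uw: "u \<in> V" "w \<in> V" "{u, w} \<in> E" by (simp_all add: adj_in_def)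
    consider "w \<in> C" | "u \<in> C" "w \<notin> C" | "u \<notin> C" "w \<notin> C" by blast
    then show ?case
    proof cases
      case 1
      then show ?thesis by simp
    next
      case 2
      moreover have "w \<in> comp_of V (E - {{u, w}}) w" using uw(2) by (rule mem_comp_of_self)
      ultimately show ?thesis using uw by blast
    next
      case 3
      with step.IH obtain t1 t2 where t: "t1 \<in> C" "t2 \<in> V - C" "{t1, t2} \<in> E"
        "u \<in> comp_of V (E - {{t1, t2}}) t2" by blast
      with 3 uw have "adj_in V (E - {{t1, t2}}) u w"
        by (auto simp: adj_in_def doubleton_eq_iff)
      with t show ?thesis using comp_of_closed[OF t(4)] by blast
    qed
  qed
  with assms(3) that show ?thesis by blast
qed

lemma finite_boundary_pairs:
  assumes "finite (boundary V E C)"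
  shows "finite {(x, y). x \<in> C \<and> y \<in> V - C \<and> {x, y} \<in> E}"
proof -
  let ?P = "{(x, y). x \<in> C \<and> y \<in> V - C \<and> {x, y} \<in> E}"
  have "inj_on (\<lambda>(x, y). {x, y}) ?P" by (auto simp: inj_on_def doubleton_eq_iff)
  moreover have "(\<lambda>(x, y). {x, y}) ` ?P \<subseteq> boundary V E C"
    by (auto simp: edges_between_def)
  ultimately show ?thesis
    using finite_subset[OF _ assms] by (blast intro: finite_imageD)
qed

lemma reachable_in_omega_edge_block:
  assumes "B \<in> omega_edge_blocks V E" "a \<in> B" "b \<in> B" "F \<subseteq> E" "finite F"
  shows "(adj_in V (E - F))\<^sup>*\<^sup>* a b"
proof -
  obtain x where "B = {y \<in> V. \<not> fin_separable V E x y}"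
    using assms(1) unfolding omega_edge_blocks_def by blast
  with assms(2,3) have "\<not> fin_separable V E x a" "\<not> fin_separable V E x b" by auto
  with assms(4,5) have "(adj_in V (E - F))\<^sup>*\<^sup>* x a" "(adj_in V (E - F))\<^sup>*\<^sup>* x b"
    unfolding fin_separable_def comp_of_def by auto
  then show ?thesis by (meson reachable_sym rtranclp_trans)
qed

lemma omega_edge_block_reachable_within:
  assumes "B \<in> omega_edge_blocks V E" "finite (boundary V E C)" "a \<in> B" "a \<in> C" "b \<in> B"
  shows "b \<in> C \<and> (adj_in C E)\<^sup>*\<^sup>* a b"
proof -
  have "boundary V E C \<subseteq> E" unfolding edges_between_def by blast
  with assms(1,3,5) have "(adj_in V (E - boundary V E C))\<^sup>*\<^sup>* a b"
    using assms(2) by (rule reachable_in_omega_edge_block)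
  then show ?thesis using assms(4) by (rule reachable_avoiding_boundary) simp
qed

lemma connected_in_UN:
  assumes "connected_in ET C'"
    and "\<And>t. t \<in> C' \<Longrightarrow> X t \<noteq> {}"
    and "\<And>t a b. t \<in> C' \<Longrightarrow> a \<in> X t \<Longrightarrow> b \<in> X t \<Longrightarrow> (adj_in (\<Union>t\<in>C'. X t) E)\<^sup>*\<^sup>* a b"
    and "\<And>s t. adj_in C' ET s t \<Longrightarrow> edges_between E (X s) (X t) \<noteq> {}"
  shows "connected_in E (\<Union>t\<in>C'. X t)"
proof -
  let ?U = "\<Union>t\<in>C'. X t"
  have reach: "\<forall>b\<in>X t. (adj_in ?U E)\<^sup>*\<^sup>* a b"
    if "(adj_in C' ET)\<^sup>*\<^sup>* s t" "s \<in> C'" "a \<in> X s" for s t a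
    using that(1)
  proof (induction rule: rtranclp_induct)
    case base
    then show ?case using assms(3) that(2,3) by blast
  next
    case (step t w)
    from step.hyps(2) have "t \<in> C'" "w \<in> C'" by (simp_all add: adj_in_def)
    obtain x y where "{x, y} \<in> E" "x \<in> X t" "y \<in> X w"
      using assms(4)[OF step.hyps(2)] unfolding edges_between_def by blast
    with \<open>t \<in> C'\<close> \<open>w \<in> C'\<close> have "adj_in ?U E x y" by (auto simp: adj_in_def)
    with step.IH \<open>x \<in> X t\<close> have "(adj_in ?U E)\<^sup>*\<^sup>* a y" by (meson rtranclp.rtrancl_into_rtrancl)
    with assms(3)[OF \<open>w \<in> C'\<close> \<open>y \<in> X w\<close>] show ?case by (meson rtranclp_trans)
  qed
  show ?thesis
    unfolding connected_in_def
  proof (intro conjI ballI)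
    obtain t where "t \<in> C'" using assms(1) by (auto simp: connected_in_def)
    with assms(2) show "?U \<noteq> {}" by blast
  next
    fix a b assume "a \<in> ?U" "b \<in> ?U"
    then obtain s t where st: "s \<in> C'" "a \<in> X s" "t \<in> C'" "b \<in> X t" by blast
    with assms(1) have "(adj_in C' ET)\<^sup>*\<^sup>* s t" by (simp add: connected_in_def)
    with st show "(adj_in ?U E)\<^sup>*\<^sup>* a b" using reach by blast
  qed
qed

lemma boundary_UN_subset_adhesions:
  assumes "connected_in ET VT" "(\<Union>t\<in>VT. X t) = V" "C' \<subseteq> VT" "connected_in ET C'"
  shows "boundary V E (\<Union>t\<in>C'. X t) \<subseteq>
    (\<Union>(t1, t2)\<in>{(t1, t2). t1 \<in> C' \<and> t2 \<in> VT - C' \<and> {t1, t2} \<in> ET}.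
       adhesion E VT ET X t1 t2)"
proof
  fix e assume "e \<in> boundary V E (\<Union>t\<in>C'. X t)"
  then obtain x y s u where e: "e \<in> E" "e = {x, y}" and s: "s \<in> C'" "x \<in> X s"
    and u: "u \<in> VT - C'" "y \<in> X u"
    using assms(2) unfolding edges_between_def by blast
  with assms(1,3) have "(adj_in VT ET)\<^sup>*\<^sup>* s u" unfolding connected_in_def by blast
  then obtain t1 t2 where t: "t1 \<in> C'" "t2 \<in> VT - C'" "{t1, t2} \<in> ET"
      "u \<in> comp_of VT (ET - {{t1, t2}}) t2"
    using reachable_last_exit[OF _ s(1)] u(1) by blast
  from assms(4) t(2) have "connected_in (ET - {{t1, t2}}) C'"
    unfolding connected_in_def by (simp add: adj_in_Diff_edge)
  then have "C' \<subseteq> comp_of VT (ET - {{t1, t2}}) t1"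
    using assms(3) t(1) by (rule connected_in_subset_comp_of)
  with e s u t(4) have "e \<in> adhesion E VT ET X t1 t2"
    unfolding adhesion_def edges_between_def by blast
  with t(1-3) show "e \<in> (\<Union>(t1, t2)\<in>{(t1, t2). t1 \<in> C' \<and> t2 \<in> VT - C' \<and> {t1, t2} \<in> ET}.
       adhesion E VT ET X t1 t2)" by blast
qed

lemma region_UN_parts:
  assumes tcd: "tree_cut_decomposition V VT ET X"
    and "finite_adhesion E VT ET X"
    and "X ` VT \<subseteq> omega_edge_blocks V E"
    and "\<And>t1 t2. {t1, t2} \<in> ET \<Longrightarrow> edges_between E (X t1) (X t2) \<noteq> {}"
    and "region VT ET C'"
  shows "region V E (\<Union>t\<in>C'. X t)"
proof -
  let ?U = "\<Union>t\<in>C'. X t"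
  from tcd have VT: "connected_in ET VT" "\<forall>t\<in>VT. X t \<noteq> {}" "(\<Union>t\<in>VT. X t) = V"
    unfolding tree_cut_decomposition_def tree_def by auto
  from assms(5) have C': "C' \<subseteq> VT" "connected_in ET C'" "finite (boundary VT ET C')"
    unfolding region_def by auto
  have "finite (\<Union>(t1, t2)\<in>{(t1, t2). t1 \<in> C' \<and> t2 \<in> VT - C' \<and> {t1, t2} \<in> ET}.
       adhesion E VT ET X t1 t2)"
    using finite_boundary_pairs[OF C'(3)] assms(2) unfolding finite_adhesion_def by auto
  then have fin: "finite (boundary V E ?U)"
    using boundary_UN_subset_adhesions[OF VT(1,3) C'(1,2)] by (rule finite_subset[rotated])
  have "connected_in E ?U"
  proof (rule connected_in_UN)
    show "(adj_in ?U E)\<^sup>*\<^sup>* a b" if "t \<in> C'" "a \<in> X t" "b \<in> X t" for t a b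
      using omega_edge_block_reachable_within[OF _ fin] that C'(1) assms(3) by blast
  qed (use C' VT assms(4) in \<open>auto simp: adj_in_def\<close>)
  with fin C'(1) VT(3) show ?thesis unfolding region_def by blast
qed

lemma eq_UN_parts_meeting:
  assumes "(\<Union>t\<in>VT. X t) = V" "X ` VT \<subseteq> omega_edge_blocks V E"
    and "C \<subseteq> V" "finite (boundary V E C)"
  shows "C = (\<Union>t\<in>{t \<in> VT. X t \<inter> C \<noteq> {}}. X t)"
proof
  show "C \<subseteq> (\<Union>t\<in>{t \<in> VT. X t \<inter> C \<noteq> {}}. X t)" using assms(1,3) by blast
next
  show "(\<Union>t\<in>{t \<in> VT. X t \<inter> C \<noteq> {}}. X t) \<subseteq> C"
  proof
    fix b assume "b \<in> (\<Union>t\<in>{t \<in> VT. X t \<inter> C \<noteq> {}}. X t)"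
    then obtain t a where t: "t \<in> VT" "a \<in> X t" "a \<in> C" "b \<in> X t" by blast
    with assms(2) have "X t \<in> omega_edge_blocks V E" by blast
    from omega_edge_block_reachable_within[OF this assms(4) t(2,3,4)] show "b \<in> C" ..
  qed
qed

lemma finite_boundary_parts:
  assumes "\<forall>s\<in>VT. \<forall>t\<in>VT. s \<noteq> t \<longrightarrow> X s \<inter> X t = {}" "(\<Union>t\<in>VT. X t) = V"
    and "\<And>t1 t2. {t1, t2} \<in> ET \<Longrightarrow> edges_between E (X t1) (X t2) \<noteq> {}"
    and "S \<subseteq> VT" "finite (boundary V E (\<Union>t\<in>S. X t))"
  shows "finite (boundary VT ET S)"
proof -
  define parts where "parts e = {t \<in> VT. X t \<inter> e \<noteq> {}}" for e
  have "boundary VT ET S \<subseteq> parts ` boundary V E (\<Union>t\<in>S. X t)"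
  proof
    fix f assume "f \<in> boundary VT ET S"
    then obtain t1 t2 where t: "f \<in> ET" "f = {t1, t2}" "t1 \<in> S" "t2 \<in> VT - S"
      unfolding edges_between_def by blast
    with assms(3) obtain e a b where e: "e \<in> E" "e = {a, b}" "a \<in> X t1" "b \<in> X t2"
      unfolding edges_between_def by blast
    have "t1 \<in> VT" using t(3) assms(4) by blast
    have unique: "s = t'" if "s \<in> VT" "t' \<in> VT" "x \<in> X s" "x \<in> X t'" for s t' x
      using assms(1) that by blast
    have "b \<notin> (\<Union>t\<in>S. X t)"
    proof
      assume "b \<in> (\<Union>t\<in>S. X t)"
      then obtain s where "s \<in> S" "b \<in> X s" by blast
      with unique[of s t2 b] assms(4) t(4) e(4) show False by blast
    qed
    moreover have "b \<in> V" using assms(2) t(4) e(4) by blast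
    ultimately have "e \<in> boundary V E (\<Union>t\<in>S. X t)"
      using e(1-3) t(3) unfolding edges_between_def by blast
    moreover have "parts e = f"
      unfolding parts_def e(2) t(2) using unique \<open>t1 \<in> VT\<close> t(4) e(3,4) by blast
    ultimately show "f \<in> parts ` boundary V E (\<Union>t\<in>S. X t)" by blast
  qed
  then show ?thesis by (rule finite_surj[OF assms(5)])
qed

lemma region_eq_UN_region_parts:
  assumes tcd: "tree_cut_decomposition V VT ET X"
    and "X ` VT \<subseteq> omega_edge_blocks V E"
    and "\<And>t1 t2. {t1, t2} \<in> ET \<Longrightarrow> edges_between E (X t1) (X t2) \<noteq> {}"
    and "region V E C"
  shows "\<exists>\<C>. finite \<C> \<and> (\<forall>C'\<in>\<C>. region VT ET C') \<and>
           (\<forall>C1\<in>\<C>. \<forall>C2\<in>\<C>. C1 \<noteq> C2 \<longrightarrow> C1 \<inter> C2 = {}) \<and>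
           C = (\<Union>C'\<in>\<C>. \<Union>t\<in>C'. X t)"
proof -
  from tcd have VT: "connected_in ET VT" "\<forall>s\<in>VT. \<forall>t\<in>VT. s \<noteq> t \<longrightarrow> X s \<inter> X t = {}"
    "(\<Union>t\<in>VT. X t) = V"
    unfolding tree_cut_decomposition_def tree_def by auto
  define S where "S = {t \<in> VT. X t \<inter> C \<noteq> {}}"
  from assms(4) have "C \<subseteq> V" "finite (boundary V E C)" unfolding region_def by auto
  with VT(3) assms(2) have C: "C = (\<Union>t\<in>S. X t)"
    unfolding S_def by (intro eq_UN_parts_meeting) auto
  have "S \<subseteq> VT" unfolding S_def by blast
  have fin: "finite (boundary VT ET S)"
    using VT(2,3) assms(3) \<open>S \<subseteq> VT\<close> \<open>finite (boundary V E C)\<close>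
    unfolding C by (rule finite_boundary_parts)
  show ?thesis
  proof (intro exI conjI ballI impI)
    show "finite (comp_of S ET ` S)"
      using VT(1) \<open>S \<subseteq> VT\<close> fin by (rule finite_comp_of_image)
    show "region VT ET K" if "K \<in> comp_of S ET ` S" for K
      using that region_comp_of[OF \<open>S \<subseteq> VT\<close> _ fin] by blast
    show "K1 \<inter> K2 = {}" if "K1 \<in> comp_of S ET ` S" "K2 \<in> comp_of S ET ` S" "K1 \<noteq> K2"
      for K1 K2
    proof -
      from that(1,2) obtain s t where "K1 = comp_of S ET s" "K2 = comp_of S ET t" by blast
      with that(3) show ?thesis by (simp add: comp_of_disjoint)
    qed
    show "C = (\<Union>K\<in>comp_of S ET ` S. \<Union>t\<in>K. X t)"
      unfolding C UN_UN_flatten[symmetric] image_image UN_comp_of ..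
  qed
qed

theorem lemma2p5:
  fixes V :: "'a set" and E :: "'a set set"
    and VT :: "'b set" and ET :: "'b set set" and X :: "'b \<Rightarrow> 'a set"
  assumes "graph V E"
    and "connected_in E V"
    and "tree_cut_decomposition V VT ET X"
    and "finite_adhesion E VT ET X"
    and "X ` VT = omega_edge_blocks V E"
    and "\<And>t1 t2. {t1, t2} \<in> ET \<Longrightarrow> edges_between E (X t1) (X t2) \<noteq> {}"
  shows "(\<forall>C'. region VT ET C' \<longrightarrow> region V E (\<Union>t\<in>C'. X t))
       \<and> (\<forall>C. region V E C \<longrightarrow>
            (\<exists>\<C>. finite \<C> \<and> (\<forall>C'\<in>\<C>. region VT ET C') \<and>
                 (\<forall>C1\<in>\<C>. \<forall>C2\<in>\<C>. C1 \<noteq> C2 \<longrightarrow> C1 \<inter> C2 = {}) \<and>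
                 C = (\<Union>C'\<in>\<C>. \<Union>t\<in>C'. X t)))"
  using region_UN_parts[OF assms(3,4) equalityD1[OF assms(5)] assms(6)]
    region_eq_UN_region_parts[OF assms(3) equalityD1[OF assms(5)] assms(6)] by blast

end
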